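(* Let $(a_{i,j})_{(i,j)\in J}$ be an array of random variables in a unital complex C$^*$-algebra $\mathcal{A}$ which is strongly matricially free with respect to $(\varphi_{i,j})$, with internal units $(1_{i,j})$ generating the unital C$^*$-subalgebra $\mathcal{I}$, and let $R_{i,j}$ be the R-transform of the distribution $\mu_{i,j}$ of $a_{i,j}$ in the state $\varphi_{i,j}$. Let $A=\sum_{(i,j)\in J}a_{i,j}$. Then $$\mathcal{R}_A(z)=\sum_{(i,j)\in J}R_{i,j}(z)1_{i,j},$$ for sufficiently small $|z|$, is an operatorial R-transform of the $\varphi$-distribution of $A$.
   Context: Strong matricial freeness: $J\subseteq\{1,2\}\times\{1,2\}$; $\varphi$ is a distinguished state on $\mathcal{A}$; for each $j$, $\varphi_j(a)=\varphi(b_j^*ab_j)$ with a fixed $b_j\in\mathcal{A}_{j,j}\cap\ker\varphi$, $\varphi(b_j^*b_j)=1$; $\varphi_{j,j}=\varphi$ and $\varphi_{i,j}=\varphi_j$ for $i\neq j$. The array $(a_{i,j})$ is strongly matricially free w.r.t. $(\varphi_{i,j})$ if there are projections $1_{i,j}$ (internal units) generating a commutative unital subalgebra $\mathcal{I}$ such that the C$^*$-subalgebras $\mathcal{A}_{i,j}$ generated by $a_{i,j},a_{i,j}^*,1_{i,j}$ (in which $1_{i,j}$ is a unit) satisfy: (a) $\varphi(u_1au_2)=\varphi(u_1)\varphi(a)\varphi(u_2)$ for $a\in\mathcal{A}$, $u_1,u_2\in\mathcal{I}$; (b) $\varphi(1_{i,j})=\delta_{i,j}$; (c) with $\Gamma=\bigcup_m\{((i_1,i_2),(i_2,i_3),\dots,(i_m,i_{m+1})):i_1\ne\dots\ne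 i_m\}$, whenever $(i_1,j_1)\ne\dots\ne(i_m,j_m)$, $a_k\in\mathcal{A}_{i_k,j_k}\cap\ker\varphi_{i_k,j_k}$ ($1<k\le m$), $a\in\mathcal{A}$: $\varphi(a1_{i_1,j_1}a_2\cdots a_m)=\varphi(aa_2\cdots a_m)$ if the tuple of pairs lies in $\Gamma$, else $0$; (d) $\varphi(a_1\cdots a_n)=0$ whenever $a_k\in\mathcal{A}_{i_k,j_k}\cap\ker\varphi_{i_k,j_k}$ and $(i_1,j_1)\ne\dots\ne(i_n,j_n)$. Scalar R-transform: for a distribution (moment sequence $m_n=\omega(x^n)$), $G(w)=\sum_n m_nw^{-n-1}$ and $R$ is the power series analytic near $0$ with $G(1/z+R(z))=z$ for small $|z|>0$. Operatorial Cauchy transform: for $a\in\mathcal{A}$ and invertible $b\in\mathcal{I}$ with $\|b^{-1}\|<\|a\|^{-1}$, $\mathcal{G}_a(b)=\sum_{n\ge0}\varphi(b^{-1}(ab^{-1})^n)$. An operatorial R-transform of the $\varphi$-distribution of $a$ is an $\mathcal{I}$-valued power series $\mathcal{R}_a(z)=\sum_{n\ge1}c_nz^{n-1}$, $c_n\in\mathcal{I}$, norm convergent for small $|z|$, with $\mathcal{G}_a(\frac1z+\mathcal{R}_a(z))=z$ for all sufficiently small positive $|z|$. (The series in the claim is called the matricial R-transform.) *)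

theory Defs
  imports "HOL-Analysis.Analysis"
begin

text \<open>A unital complex C*-algebra is modelled on a type 'a that is a real Banach algebra
 with unit (norm 1 = 1), together with an explicit complex scalar multiplication sc
 (extending the real one) and an involution star satisfying the C*-identity.\<close>

definition unital_cstar_algebra ::
  "(complex \<Rightarrow> 'a::{real_normed_algebra_1,banach} \<Rightarrow> 'a) \<Rightarrow> ('a \<Rightarrow> 'a) \<Rightarrow> bool" where
  "unital_cstar_algebra sc star \<longleftrightarrow>
     (\<forall>c d x. sc (c + d) x = sc c x + sc d x) \<and>
     (\<forall>c x y. sc c (x + y) = sc c x + sc c y) \<and>
     (\<forall>c d x. sc c (sc d x) = sc (c * d) x) \<and>
     (\<forall>r x. sc (complex_of_real r) x = r *\<^sub>R x) \<and>
     (\<forall>c x. norm (sc c x) = cmod c * norm x) \<and>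
     (\<forall>c x y. sc c (x * y) = sc c x * y \<and> sc c (x * y) = x * sc c y) \<and>
     (\<forall>x. star (star x) = x) \<and>
     (\<forall>x y. star (x + y) = star x + star y) \<and>
     (\<forall>c x. star (sc c x) = sc (cnj c) (star x)) \<and>
     (\<forall>x y. star (x * y) = star y * star x) \<and>
     (\<forall>x. norm (star x * x) = (norm x)\<^sup>2)"

definition is_state ::
  "(complex \<Rightarrow> 'a::{real_normed_algebra_1,banach} \<Rightarrow> 'a) \<Rightarrow> ('a \<Rightarrow> 'a) \<Rightarrow> ('a \<Rightarrow> complex) \<Rightarrow> bool" where
  "is_state sc star \<phi> \<longleftrightarrow>
     (\<forall>x y. \<phi> (x + y) = \<phi> x + \<phi> y) \<and>
     (\<forall>c x. \<phi> (sc c x) = c * \<phi> x) \<and>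
     (\<forall>x. Im (\<phi> (star x * x)) = 0 \<and> Re (\<phi> (star x * x)) \<ge> 0) \<and>
     \<phi> 1 = 1"

definition cstar_gen ::
  "(complex \<Rightarrow> 'a::{real_normed_algebra_1,banach} \<Rightarrow> 'a) \<Rightarrow> ('a \<Rightarrow> 'a) \<Rightarrow> 'a set \<Rightarrow> 'a set" where
  "cstar_gen sc star S = \<Inter>{B. S \<subseteq> B \<and> 0 \<in> B \<and> closed B \<and>
       (\<forall>x\<in>B. \<forall>y\<in>B. x + y \<in> B \<and> x * y \<in> B) \<and>
       (\<forall>c. \<forall>x\<in>B. sc c x \<in> B) \<and> (\<forall>x\<in>B. star x \<in> B)}"

definition mstate ::
  "('a::{real_normed_algebra_1,banach} \<Rightarrow> 'a) \<Rightarrow> ('a \<Rightarrow> complex) \<Rightarrow> (nat \<Rightarrow> 'a) \<Rightarrow> nat \<times> nat \<Rightarrow> 'a \<Rightarrow> complex" where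
  "mstate star \<phi> b p x = (if fst p = snd p then \<phi> x else \<phi> (star (b (snd p)) * x * b (snd p)))"

definition alt_distinct :: "'b list \<Rightarrow> bool" where
  "alt_distinct ps \<longleftrightarrow> (\<forall>k. Suc k < length ps \<longrightarrow> ps ! k \<noteq> ps ! Suc k)"

definition in_Gamma :: "(nat \<times> nat) list \<Rightarrow> bool" where
  "in_Gamma ps \<longleftrightarrow> ps \<noteq> [] \<and>
     (\<forall>k. Suc k < length ps \<longrightarrow> snd (ps ! k) = fst (ps ! Suc k) \<and> fst (ps ! k) \<noteq> fst (ps ! Suc k))"

definition strongly_matricially_free ::
  "(complex \<Rightarrow> 'a::{real_normed_algebra_1,banach} \<Rightarrow> 'a) \<Rightarrow> ('a \<Rightarrow> 'a) \<Rightarrow> ('a \<Rightarrow> complex) \<Rightarrow>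
   (nat \<Rightarrow> 'a) \<Rightarrow> (nat \<times> nat) set \<Rightarrow> (nat \<times> nat \<Rightarrow> 'a) \<Rightarrow> (nat \<times> nat \<Rightarrow> 'a) \<Rightarrow> bool" where
  "strongly_matricially_free sc star \<phi> b J a u \<longleftrightarrow>
    (let I = cstar_gen sc star (insert 1 (u ` J));
         Alg = (\<lambda>p. cstar_gen sc star {a p, star (a p), u p});
         \<psi> = mstate star \<phi> b in
     \<comment> \<open>internal units: projections generating a commutative algebra I\<close>
     (\<forall>p\<in>J. star (u p) = u p \<and> u p * u p = u p) \<and>
     (\<forall>x\<in>I. \<forall>y\<in>I. x * y = y * x) \<and>
     \<comment> \<open>u p is a unit of Alg p\<close>
     (\<forall>p\<in>J. \<forall>x\<in>Alg p. u p * x = x \<and> x * u p = x) \<and>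
     \<comment> \<open>the elements b_j\<close>
     (\<forall>p\<in>J. fst p \<noteq> snd p \<longrightarrow>
        (snd p, snd p) \<in> J \<and> b (snd p) \<in> Alg (snd p, snd p) \<and> \<phi> (b (snd p)) = 0 \<and>
        \<phi> (star (b (snd p)) * b (snd p)) = 1) \<and>
     \<comment> \<open>(a)\<close>
     (\<forall>x u1 u2. u1 \<in> I \<longrightarrow> u2 \<in> I \<longrightarrow> \<phi> (u1 * x * u2) = \<phi> u1 * \<phi> x * \<phi> u2) \<and>
     \<comment> \<open>(b)\<close>
     (\<forall>p\<in>J. \<phi> (u p) = (if fst p = snd p then 1 else 0)) \<and>
     \<comment> \<open>(c)\<close>
     (\<forall>p qs ys x. qs \<noteq> [] \<longrightarrow> set (p # qs) \<subseteq> J \<longrightarrow> alt_distinct (p # qs) \<longrightarrow>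
        length ys = length qs \<longrightarrow>
        (\<forall>k<length qs. ys ! k \<in> Alg (qs ! k) \<and> \<psi> (qs ! k) (ys ! k) = 0) \<longrightarrow>
        \<phi> (x * u p * prod_list ys) =
          (if in_Gamma (p # qs) then \<phi> (x * prod_list ys) else 0)) \<and>
     \<comment> \<open>(d)\<close>
     (\<forall>ps xs. ps \<noteq> [] \<longrightarrow> set ps \<subseteq> J \<longrightarrow> alt_distinct ps \<longrightarrow> length xs = length ps \<longrightarrow>
        (\<forall>k<length ps. xs ! k \<in> Alg (ps ! k) \<and> \<psi> (ps ! k) (xs ! k) = 0) \<longrightarrow>
        \<phi> (prod_list xs) = 0))"

definition scalar_R_transform :: "(nat \<Rightarrow> complex) \<Rightarrow> (complex \<Rightarrow> complex) \<Rightarrow> bool" where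
  "scalar_R_transform m R \<longleftrightarrow>
     (\<exists>r \<epsilon>. \<epsilon> > 0 \<and> (\<forall>z. cmod z < \<epsilon> \<longrightarrow> (\<lambda>n. r n * z ^ n) sums R z)) \<and>
     (\<forall>\<^sub>F z in at 0. (\<lambda>n. m n * inverse (1 / z + R z) ^ Suc n) sums z)"

definition op_R_transform ::
  "(complex \<Rightarrow> 'a::{real_normed_algebra_1,banach} \<Rightarrow> 'a) \<Rightarrow> ('a \<Rightarrow> complex) \<Rightarrow> 'a set \<Rightarrow> 'a \<Rightarrow>
   (complex \<Rightarrow> 'a) \<Rightarrow> bool" where
  "op_R_transform sc \<phi> I x Rop \<longleftrightarrow>
     (\<exists>c \<epsilon>. \<epsilon> > 0 \<and> (\<forall>n. c (Suc n) \<in> I) \<and>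
        (\<forall>z. cmod z < \<epsilon> \<longrightarrow> summable (\<lambda>n. norm (sc (z ^ n) (c (Suc n)))) \<and>
                                (\<lambda>n. sc (z ^ n) (c (Suc n))) sums Rop z)) \<and>
     (\<forall>\<^sub>F z in at 0. \<exists>binv.
        sc (1 / z) 1 + Rop z \<in> I \<and>
        (sc (1 / z) 1 + Rop z) * binv = 1 \<and> binv * (sc (1 / z) 1 + Rop z) = 1 \<and>
        norm binv * norm x < 1 \<and>
        (\<lambda>n. \<phi> (binv * (x * binv) ^ n)) sums z)"

end

theory Submission
  imports Defs
begin

text \<open>For small \<open>z\<close> put \<open>w = 1/z + R(z)\<close>. Since the Cauchy transform of \<open>a\<^sub>i\<^sub>j\<close> in \<open>\<phi>\<^sub>i\<^sub>j\<close> takes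
  the value \<open>z\<close> at \<open>w\<close>, the compressed resolvent \<open>u\<^sub>i\<^sub>j (w - a\<^sub>i\<^sub>j)\<inverse>\<close> divided by \<open>z\<close> differs from
  \<open>u\<^sub>i\<^sub>j\<close> by an element \<open>P\<^sub>i\<^sub>j\<close> of \<open>\<A>\<^sub>i\<^sub>j\<close> that is centred for \<open>\<phi>\<^sub>i\<^sub>j\<close>, and these local resolvent
  identities express the inverse of \<open>1/z + \<Sum> R\<^sub>i\<^sub>j(z) u\<^sub>i\<^sub>j - A\<close> as \<open>z (1 + \<Sum> W\<^sub>i\<^sub>j)\<close>, where the \<open>W\<^sub>i\<^sub>j\<close>
  solve a fixed-point equation. Iterating it writes each \<open>W\<^sub>i\<^sub>j\<close> as a norm limit of sums of
  alternating products of the \<open>P\<^sub>i\<^sub>j\<close>, which \<open>\<phi>\<close> annihilates by condition (d). So \<open>\<phi>\<close> of the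
  inverse is \<open>z\<close>, i.e. \<open>G\<^sub>A(1/z + \<R>\<^sub>A(z)) = z\<close>.\<close>

lemma summable_norm_power:
  fixes x :: "'a::real_normed_algebra_1"
  assumes "norm x < 1"
  shows "summable (\<lambda>n. norm (x ^ n))"
  by (rule summable_comparison_test[OF _ summable_geometric[of "norm x"]])
    (use assms in \<open>auto intro: norm_power_ineq\<close>)

lemma neumann_series_inverse:
  fixes x :: "'a::{real_normed_algebra_1,banach}"
  assumes "norm x < 1"
  shows "(1 - x) * (\<Sum>n. x ^ n) = 1" and "(\<Sum>n. x ^ n) * (1 - x) = 1"
proof -
  have s: "summable (\<lambda>n. x ^ n)"
    by (rule summable_norm_cancel[OF summable_norm_power[OF assms]])
  have partial: "(\<lambda>n. \<Sum>k<n. x ^ k) \<longlonglongrightarrow> (\<Sum>n. x ^ n)"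
    using s by (simp add: summable_LIMSEQ)
  have tail: "(\<lambda>n. 1 - x ^ n) \<longlonglongrightarrow> 1"
    using tendsto_diff[OF tendsto_const summable_LIMSEQ_zero[OF s]] by simp
  have left: "(1 - x) * (\<Sum>k<n. x ^ k) = 1 - x ^ n" for n
    by (induction n) (simp_all add: distrib_left, simp add: algebra_simps)
  have right: "(\<Sum>k<n. x ^ k) * (1 - x) = 1 - x ^ n" for n
    by (induction n) (simp_all add: distrib_right, simp add: algebra_simps power_Suc2 power_commutes)
  show "(1 - x) * (\<Sum>n. x ^ n) = 1"
    using tendsto_mult_left[OF partial, of "1 - x"] tail by (simp add: left LIMSEQ_unique)
  show "(\<Sum>n. x ^ n) * (1 - x) = 1"
    using tendsto_mult_right[OF partial, of "1 - x"] tail by (simp add: right LIMSEQ_unique)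
qed

lemma norm_neumann_series_le:
  fixes x :: "'a::{real_normed_algebra_1,banach}"
  assumes "norm x < 1"
  shows "norm (\<Sum>n. x ^ n) \<le> 1 / (1 - norm x)"
proof -
  have g: "summable (\<lambda>n. norm x ^ n)" using assms by (intro summable_geometric) simp
  have "norm (\<Sum>n. x ^ n) \<le> (\<Sum>n. norm (x ^ n))"
    by (rule summable_norm[OF summable_norm_power[OF assms]])
  also have "\<dots> \<le> (\<Sum>n. norm x ^ n)"
    by (intro suminf_le summable_norm_power assms g) (simp add: norm_power_ineq)
  also have "\<dots> = 1 / (1 - norm x)" using assms by (simp add: suminf_geometric)
  finally show ?thesis .
qed

lemma invertible_one_plus_small:
  fixes m :: "'a::{real_normed_algebra_1,banach}"
  assumes "norm m < 1"
  shows "\<exists>q. (1 + m) * q = 1 \<and> q * (1 + m) = 1 \<and> norm q \<le> 1 / (1 - norm m)"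
  using neumann_series_inverse[of "- m"] norm_neumann_series_le[of "- m"] assms
  by (intro exI[of _ "\<Sum>n. (- m) ^ n"]) auto

lemma gbinomial_half_abs_le_1: "\<bar>(1/2::real) gchoose n\<bar> \<le> 1"
proof (induction n)
  case (Suc n)
  have "(1/2::real) * ((1/2) gchoose n) = of_nat n * ((1/2) gchoose n) + of_nat (Suc n) * ((1/2) gchoose Suc n)"
    by (rule gbinomial_mult_1)
  then have "((1/2::real) gchoose Suc n) = (1/2 - of_nat n) / of_nat (Suc n) * ((1/2) gchoose n)"
    by (simp add: field_simps)
  moreover have "\<bar>(1/2 - of_nat n) / of_nat (Suc n)\<bar> \<le> (1::real)"
    by (simp add: abs_le_iff divide_le_eq le_divide_eq)
  ultimately show ?case
    using mult_mono[OF _ Suc.IH] by (simp add: abs_mult)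
qed simp

lemma gbinomial_half_convolution:
  "(\<Sum>i\<le>k. ((1/2::real) gchoose i) * ((1/2) gchoose (k - i))) = (if k \<le> 1 then 1 else 0)"
proof -
  have "(\<Sum>i\<le>k. ((1/2::real) gchoose i) * ((1/2) gchoose (k - i))) = (of_nat 1 :: real) gchoose k"
    using gbinomial_Vandermonde[of "1/2::real" "1/2" k] by (simp add: atLeast0AtMost)
  also have "\<dots> = of_nat (1 choose k)" by (simp only: binomial_gbinomial)
  finally show ?thesis by (cases k) (auto simp: binomial_eq_0)
qed

lemma eventually_at_0_norm_mult_less:
  fixes c e :: real
  assumes "e > 0"
  shows "\<forall>\<^sub>F z in at (0::'a::real_normed_vector). norm z * c < e"
proof -
  have "((\<lambda>z. norm z * c) \<longlongrightarrow> 0) (at (0::'a))"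
    by (intro tendsto_mult_left_zero tendsto_norm_zero tendsto_ident_at)
  then show ?thesis using assms by (rule order_tendstoD(2))
qed

lemma scalar_R_transform_power_series:
  assumes "scalar_R_transform m R"
  obtains r where "\<forall>\<^sub>F z in nhds 0. summable (\<lambda>n. norm (r n * z ^ n)) \<and> (\<lambda>n. r n * z ^ n) sums R z"
proof -
  obtain r \<epsilon> where \<epsilon>: "\<epsilon> > 0" and series: "\<And>z. cmod z < \<epsilon> \<Longrightarrow> (\<lambda>n. r n * z ^ n) sums R z"
    using assms unfolding scalar_R_transform_def by blast
  define K where "K = complex_of_real (\<epsilon> / 2)"
  have K: "summable (\<lambda>n. r n * K ^ n)" using series[of K] \<epsilon> by (simp add: K_def sums_summable)
  have "summable (\<lambda>n. norm (r n * z ^ n)) \<and> (\<lambda>n. r n * z ^ n) sums R z" if "cmod z < \<epsilon> / 2" for z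
    using powser_insidea[OF K] series that \<epsilon> by (simp add: K_def)
  then have "\<forall>\<^sub>F z in nhds 0. summable (\<lambda>n. norm (r n * z ^ n)) \<and> (\<lambda>n. r n * z ^ n) sums R z"
    unfolding eventually_nhds_metric dist_norm using \<epsilon> by (intro exI[of _ "\<epsilon> / 2"]) auto
  then show ?thesis by (rule that)
qed

lemma scalar_R_transform_eventually_small:
  assumes "scalar_R_transform m R" and "e > 0"
  shows "\<forall>\<^sub>F z in at 0. cmod (z * R z) < e"
proof -
  obtain r \<epsilon> where \<epsilon>: "\<epsilon> > 0" and series: "\<And>z. cmod z < \<epsilon> \<Longrightarrow> (\<lambda>n. r n * z ^ n) sums R z"
    using assms(1) unfolding scalar_R_transform_def by blast
  define g where "g z = (\<Sum>n. r n * z ^ n)" for z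
  define K where "K = complex_of_real (\<epsilon> / 2)"
  have "summable (\<lambda>n. r n * K ^ n)" using series[of K] \<epsilon> by (simp add: K_def sums_summable)
  then have "isCont g 0" unfolding g_def by (rule isCont_powser) (use \<epsilon> in \<open>simp add: K_def\<close>)
  then have "isCont (\<lambda>z. z * g z) 0" by (intro continuous_intros)
  then have "((\<lambda>z. z * g z) \<longlongrightarrow> 0) (at 0)" by (simp add: isCont_def)
  then have "\<forall>\<^sub>F z in at 0. cmod (z * g z) < e"
    using order_tendstoD(2)[OF tendsto_norm_zero assms(2)] by blast
  moreover have "\<forall>\<^sub>F z in at 0. R z = g z"
    unfolding eventually_at dist_norm using \<epsilon> series by (auto simp: g_def sums_iff intro!: exI[of _ \<epsilon>])
  ultimately show ?thesis by eventually_elim simp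
qed

lemma inverse_shifted_reciprocal_bounds:
  fixes z R :: complex
  assumes z: "z \<noteq> 0" and zR: "cmod (z * R) \<le> 1/64"
  shows "1/z + R \<noteq> 0" and "cmod (inverse (1/z + R)) \<le> 64/63 * cmod z"
    and "cmod (inverse (1/z + R) / z - 1) \<le> 1/63"
proof -
  have n1: "cmod (1 + z * R) \<ge> 63/64"
    using norm_triangle_ineq2[of 1 "- (z * R)"] zR by simp
  then have nz: "1 + z * R \<noteq> 0" by auto
  have "z * (1/z + R) = 1 + z * R"
    using z by (simp add: field_simps)
  then have w: "1/z + R = (1 + z * R) / z"
    using z by (metis nonzero_mult_div_cancel_left)
  then have l: "inverse (1/z + R) = z / (1 + z * R)" by simp
  show "1/z + R \<noteq> 0" using w z nz by simp
  show "cmod (inverse (1/z + R)) \<le> 64/63 * cmod z"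
    using n1 z by (simp add: l norm_divide divide_le_eq mult.commute mult_left_mono)
  have "inverse (1/z + R) / z = inverse (1 + z * R)"
    unfolding l using z by (simp add: inverse_eq_divide)
  then have "inverse (1/z + R) / z - 1 = - (z * R) / (1 + z * R)"
    using nz by (auto simp: field_simps)
  then have "cmod (inverse (1/z + R) / z - 1) = cmod (z * R) / cmod (1 + z * R)"
    by (simp add: norm_divide)
  also have "\<dots> \<le> (1/64) / (63/64)" using zR n1 by (intro frac_le) auto
  finally show "cmod (inverse (1/z + R) / z - 1) \<le> 1/63" by simp
qed

locale cstar =
  fixes sc :: "complex \<Rightarrow> 'a::{real_normed_algebra_1,banach} \<Rightarrow> 'a" and star :: "'a \<Rightarrow> 'a"
  assumes cstar_algebra: "unital_cstar_algebra sc star"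
begin

lemma sc_add_left: "sc (c + d) x = sc c x + sc d x"
  using cstar_algebra by (simp add: unital_cstar_algebra_def)
lemma sc_add_right: "sc c (x + y) = sc c x + sc c y"
  using cstar_algebra by (simp add: unital_cstar_algebra_def)
lemma sc_sc: "sc c (sc d x) = sc (c * d) x"
  using cstar_algebra by (simp add: unital_cstar_algebra_def)
lemma sc_of_real: "sc (complex_of_real r) x = r *\<^sub>R x"
  using cstar_algebra by (simp add: unital_cstar_algebra_def)
lemma norm_sc: "norm (sc c x) = cmod c * norm x"
  using cstar_algebra by (simp add: unital_cstar_algebra_def)
lemma sc_mult_left: "sc c (x * y) = sc c x * y"
  using cstar_algebra by (simp add: unital_cstar_algebra_def)
lemma sc_mult_right: "sc c (x * y) = x * sc c y"
  using cstar_algebra unfolding unital_cstar_algebra_def by blast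
lemma star_star [simp]: "star (star x) = x"
  using cstar_algebra by (simp add: unital_cstar_algebra_def)
lemma star_add: "star (x + y) = star x + star y"
  using cstar_algebra by (simp add: unital_cstar_algebra_def)
lemma star_sc: "star (sc c x) = sc (cnj c) (star x)"
  using cstar_algebra by (simp add: unital_cstar_algebra_def)
lemma star_mult: "star (x * y) = star y * star x"
  using cstar_algebra by (simp add: unital_cstar_algebra_def)
lemma norm_star_mult_self: "norm (star x * x) = (norm x)\<^sup>2"
  using cstar_algebra by (simp add: unital_cstar_algebra_def)

lemma sc_one [simp]: "sc 1 x = x"
  using sc_of_real[of 1 x] by simp
lemma sc_zero_left [simp]: "sc 0 x = 0"
  using sc_of_real[of 0 x] by simp
lemma sc_zero_right [simp]: "sc c 0 = 0"
  using sc_add_right[of c 0 0] by simp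
lemma sc_minus_right: "sc c (- x) = - sc c x"
  using sc_add_right[of c x "- x"] add.inverse_unique[of "sc c x"] by simp
lemma sc_diff_right: "sc c (x - y) = sc c x - sc c y"
  using sc_add_right[of c x "- y"] by (simp add: sc_minus_right)
lemma sc_minus_left: "sc (- c) x = - sc c x"
  using sc_add_left[of c "- c" x] add.inverse_unique[of "sc c x"] by simp
lemma sc_diff_left: "sc (c - d) x = sc c x - sc d x"
  using sc_add_left[of c "- d" x] by (simp add: sc_minus_left)
lemma sc_mult_sc: "sc c x * sc d y = sc (c * d) (x * y)"
  by (metis sc_mult_left sc_mult_right sc_sc mult.commute)
lemma sc_power: "sc c x ^ n = sc (c ^ n) (x ^ n)"
  by (induction n) (auto simp: sc_mult_sc)

lemma bounded_linear_sc: "bounded_linear (sc c)"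
  by (rule bounded_linear_intro[where K = "cmod c"])
    (auto simp: sc_add_right norm_sc sc_of_real[symmetric] sc_sc mult.commute)

lemma bounded_linear_sc_left: "bounded_linear (\<lambda>c. sc c x)"
  by (rule bounded_linear_intro[where K = "norm x"])
    (auto simp: sc_add_left norm_sc scaleR_conv_of_real sc_sc[symmetric] sc_of_real)

lemma sc_sum_right: "sc c (sum f A) = (\<Sum>i\<in>A. sc c (f i))"
  by (rule linear_sum[OF bounded_linear.linear[OF bounded_linear_sc]])

lemma star_zero [simp]: "star 0 = 0"
  using star_add[of 0 0] by simp
lemma star_minus: "star (- x) = - star x"
  using star_add[of x "- x"] add.inverse_unique[of "star x"] by simp
lemma star_diff: "star (x - y) = star x - star y"
  using star_add[of x "- y"] by (simp add: star_minus)
lemma star_scaleR: "star (r *\<^sub>R x) = r *\<^sub>R star x"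
  using star_sc[of "complex_of_real r" x] by (simp add: sc_of_real)
lemma star_one [simp]: "star 1 = 1"
proof -
  have "star x = star 1 * star x" for x using star_mult[of x 1] by simp
  from this[of "star 1"] show ?thesis by simp
qed
lemma star_power: "star (x ^ n) = star x ^ n"
  by (induction n) (auto simp: star_mult power_Suc2 power_commutes)

lemma norm_star [simp]: "norm (star x) = norm x"
proof -
  have le: "norm y \<le> norm (star y)" for y
  proof (cases "y = 0")
    case False
    then show ?thesis
      using norm_star_mult_self[of y] norm_mult_ineq[of "star y" y] by (simp add: power2_eq_square)
  qed simp
  show ?thesis using le[of x] le[of "star x"] by simp
qed

lemma bounded_linear_star: "bounded_linear star"
  by (rule bounded_linear_intro[where K = 1]) (auto simp: star_add star_scaleR)

text \<open>The square root comes from the binomial series of \<open>(1 - h) powr (1/2)\<close>.\<close>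
lemma selfadjoint_sqrt_one_minus:
  assumes sa: "star h = h" and small: "norm h < 1"
  shows "\<exists>y. star y * y = 1 - h"
proof -
  define t where "t n = (((1/2::real) gchoose n) * (-1) ^ n) *\<^sub>R h ^ n" for n
  have "norm (t n) \<le> norm h ^ n" for n
  proof -
    have "norm (t n) = \<bar>(1/2::real) gchoose n\<bar> * norm (h ^ n)" by (simp add: t_def abs_mult)
    also have "\<dots> \<le> 1 * norm h ^ n"
      by (intro mult_mono gbinomial_half_abs_le_1 norm_power_ineq) auto
    finally show ?thesis by simp
  qed
  then have st: "summable (\<lambda>n. norm (t n))"
    using small by (intro summable_comparison_test[OF _ summable_geometric[of "norm h"]]) auto
  define y where "y = (\<Sum>n. t n)"
  have "star y = (\<Sum>n. star (t n))"
    unfolding y_def by (rule bounded_linear.suminf[OF bounded_linear_star summable_norm_cancel[OF st]])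
  also have "\<dots> = y" by (simp add: y_def t_def star_scaleR star_power sa)
  finally have sy: "star y = y" .
  have coeff: "(\<Sum>i\<le>k. t i * t (k - i)) = (if k = 0 then 1 else if k = 1 then - h else 0)" for k
  proof -
    have "(\<Sum>i\<le>k. t i * t (k - i))
        = (\<Sum>i\<le>k. (((1/2::real) gchoose i) * ((1/2) gchoose (k - i)) * (-1) ^ k) *\<^sub>R h ^ k)"
    proof (rule sum.cong[OF refl])
      fix i assume "i \<in> {..k}"
      then have "h ^ i * h ^ (k - i) = h ^ k" "(-1::real) ^ i * (-1) ^ (k - i) = (-1) ^ k"
        by (metis atMost_iff le_add_diff_inverse power_add)+
      then show "t i * t (k - i) = (((1/2::real) gchoose i) * ((1/2) gchoose (k - i)) * (-1) ^ k) *\<^sub>R h ^ k"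
        by (simp add: t_def scaleR_scaleR mult_ac)
    qed
    also have "\<dots> = ((\<Sum>i\<le>k. ((1/2::real) gchoose i) * ((1/2) gchoose (k - i))) * (-1) ^ k) *\<^sub>R h ^ k"
      by (simp add: scaleR_sum_left sum_distrib_right)
    finally show ?thesis by (simp add: gbinomial_half_convolution)
  qed
  have "(\<lambda>k. if k = 0 then 1 else if k = 1 then - h else (0::'a)) sums (1 - h)"
    using sums_finite[of "{0,1::nat}" "\<lambda>k. if k = 0 then 1 else if k = 1 then - h else (0::'a)"] by auto
  then have "(\<lambda>k. \<Sum>i\<le>k. t i * t (k - i)) sums (1 - h)" by (simp add: coeff)
  moreover have "(\<lambda>k. \<Sum>i\<le>k. t i * t (k - i)) sums (y * y)"
    unfolding y_def by (rule Cauchy_product_sums[OF st st])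
  ultimately have "y * y = 1 - h" using sums_unique2 by blast
  then show ?thesis using sy by metis
qed

lemma norm_sc_neumann_minus_one_le:
  assumes "norm x < 1"
  shows "norm (sc k (\<Sum>n. x ^ n) - 1) \<le> (cmod (k - 1) + norm x) / (1 - norm x)"
proof -
  define N where "N = (\<Sum>n. x ^ n)"
  have "N - 1 = x * N" using neumann_series_inverse(1)[OF assms] by (simp add: N_def algebra_simps)
  moreover have "sc k N - 1 = sc (k - 1) N + (N - 1)" by (simp add: sc_diff_left)
  ultimately have "sc k N - 1 = sc (k - 1) N + x * N" by simp
  then have "norm (sc k N - 1) \<le> (cmod (k - 1) + norm x) * norm N"
    using norm_triangle_ineq[of "sc (k - 1) N" "x * N"] norm_mult_ineq[of x N]
    by (simp add: norm_sc distrib_right)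
  also have "\<dots> \<le> (cmod (k - 1) + norm x) * (1 / (1 - norm x))"
    unfolding N_def by (intro mult_left_mono norm_neumann_series_le assms) auto
  finally show ?thesis by (simp add: N_def)
qed

lemma resolvent_centring_identity:
  assumes YK: "Y * K = v" and Yv: "Y * v = Y" and vv: "v * v = v" and vK: "v * K = K"
  shows "(Y - sc c v) * (1 + (sc c K - v)) = - sc c (sc c K - v)"
proof -
  have YP: "Y * (sc c K - v) = sc c v - Y"
    by (simp add: right_diff_distrib sc_mult_right[symmetric] YK Yv)
  have vP: "sc c v * (sc c K - v) = sc c (sc c K - v)"
    by (simp add: right_diff_distrib sc_mult_left[symmetric] sc_mult_right[symmetric] vK vv sc_diff_right)
  have "(Y - sc c v) * (1 + (sc c K - v)) = Y + Y * (sc c K - v) - sc c v - sc c v * (sc c K - v)"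
    by (simp add: algebra_simps)
  then show ?thesis by (simp add: YP vP)
qed

lemma power_series_sum_sc:
  assumes "finite J"
    and series: "\<forall>p\<in>J. \<forall>\<^sub>F z in nhds 0. summable (\<lambda>n. norm (r p n * z ^ n)) \<and> (\<lambda>n. r p n * z ^ n) sums R p z"
  shows "\<exists>\<epsilon>>0. \<forall>z. cmod z < \<epsilon> \<longrightarrow>
    summable (\<lambda>n. norm (sc (z ^ n) (\<Sum>p\<in>J. sc (r p n) (v p)))) \<and>
    (\<lambda>n. sc (z ^ n) (\<Sum>p\<in>J. sc (r p n) (v p))) sums (\<Sum>p\<in>J. sc (R p z) (v p))"
proof -
  have "\<forall>\<^sub>F z in nhds 0. \<forall>p\<in>J. summable (\<lambda>n. norm (r p n * z ^ n)) \<and> (\<lambda>n. r p n * z ^ n) sums R p z"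
    using series by (rule eventually_ball_finite[OF assms(1)])
  then obtain \<epsilon> where \<epsilon>: "\<epsilon> > 0"
    and conv: "\<And>z. cmod z < \<epsilon> \<Longrightarrow> \<forall>p\<in>J. summable (\<lambda>n. norm (r p n * z ^ n)) \<and> (\<lambda>n. r p n * z ^ n) sums R p z"
    unfolding eventually_nhds_metric dist_norm by auto
  have "summable (\<lambda>n. norm (sc (z ^ n) (\<Sum>p\<in>J. sc (r p n) (v p)))) \<and>
      (\<lambda>n. sc (z ^ n) (\<Sum>p\<in>J. sc (r p n) (v p))) sums (\<Sum>p\<in>J. sc (R p z) (v p))"
    if z: "cmod z < \<epsilon>" for z
  proof
    have terms: "sc (z ^ n) (\<Sum>p\<in>J. sc (r p n) (v p)) = (\<Sum>p\<in>J. sc (r p n * z ^ n) (v p))" for n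
      by (simp add: sc_sum_right sc_sc mult.commute)
    have bound: "norm (sc (z ^ n) (\<Sum>p\<in>J. sc (r p n) (v p))) \<le> (\<Sum>p\<in>J. norm (r p n * z ^ n) * norm (v p))" for n
      unfolding terms by (rule order_trans[OF norm_sum]) (simp add: norm_sc)
    have "summable (\<lambda>n. \<Sum>p\<in>J. norm (r p n * z ^ n) * norm (v p))"
      using conv[OF z] by (intro summable_sum summable_mult2) auto
    then show "summable (\<lambda>n. norm (sc (z ^ n) (\<Sum>p\<in>J. sc (r p n) (v p))))"
      by (rule summable_comparison_test') (simp add: bound)
    have "(\<lambda>n. \<Sum>p\<in>J. sc (r p n * z ^ n) (v p)) sums (\<Sum>p\<in>J. sc (R p z) (v p))"
      using conv[OF z] by (intro sums_sum bounded_linear.sums[OF bounded_linear_sc_left]) auto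
    then show "(\<lambda>n. sc (z ^ n) (\<Sum>p\<in>J. sc (r p n) (v p))) sums (\<Sum>p\<in>J. sc (R p z) (v p))"
      by (simp add: terms)
  qed
  with \<epsilon> show ?thesis by blast
qed

end

locale cstar_state = cstar sc star
  for sc :: "complex \<Rightarrow> 'a::{real_normed_algebra_1,banach} \<Rightarrow> 'a" and star +
  fixes \<phi> :: "'a \<Rightarrow> complex"
  assumes state: "is_state sc star \<phi>"
begin

lemma state_add: "\<phi> (x + y) = \<phi> x + \<phi> y"
  using state by (simp add: is_state_def)
lemma state_sc: "\<phi> (sc c x) = c * \<phi> x"
  using state by (simp add: is_state_def)
lemma state_positive: "Im (\<phi> (star x * x)) = 0 \<and> Re (\<phi> (star x * x)) \<ge> 0"
  using state by (simp add: is_state_def)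
lemma state_one [simp]: "\<phi> 1 = 1"
  using state by (simp add: is_state_def)
lemma state_zero [simp]: "\<phi> 0 = 0"
  using state_add[of 0 0] by simp
lemma state_minus: "\<phi> (- x) = - \<phi> x"
  using state_add[of x "- x"] add.inverse_unique[of "\<phi> x"] by (simp add: state_zero)
lemma state_diff: "\<phi> (x - y) = \<phi> x - \<phi> y"
  using state_add[of x "- y"] by (simp add: state_minus)
lemma state_scaleR: "\<phi> (r *\<^sub>R x) = complex_of_real r * \<phi> x"
  using state_sc[of "complex_of_real r" x] by (simp add: sc_of_real)
lemma state_sum: "\<phi> (sum f A) = (\<Sum>i\<in>A. \<phi> (f i))"
  by (induction A rule: infinite_finite_induct) (auto simp: state_add state_zero)

lemma state_selfadjoint_le_one:
  assumes "star t = t" and "norm t < 1"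
  shows "Im (\<phi> t) = 0 \<and> Re (\<phi> t) \<le> 1"
proof -
  obtain y where "star y * y = 1 - t" using selfadjoint_sqrt_one_minus[OF assms] by blast
  then show ?thesis using state_positive[of y] by (simp add: state_diff)
qed

lemma state_selfadjoint_bound:
  assumes sa: "star h = h"
  shows "Im (\<phi> h) = 0" and "\<bar>Re (\<phi> h)\<bar> \<le> norm h"
proof -
  have scaled: "Im (\<phi> h) = 0 \<and> \<bar>Re (\<phi> h)\<bar> \<le> c" if c: "c > norm h" for c
  proof -
    have cp: "c > 0" using c norm_ge_zero[of h] by linarith
    define t where "t = (1/c) *\<^sub>R h"
    have "star t = t" "star (- t) = - t" by (simp_all add: t_def star_scaleR sa star_minus)
    moreover have "norm t < 1" "norm (- t) < 1" using c cp by (simp_all add: t_def)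
    ultimately have "Im (\<phi> t) = 0" "Re (\<phi> t) \<le> 1" "- Re (\<phi> t) \<le> 1"
      using state_selfadjoint_le_one[of t] state_selfadjoint_le_one[of "- t"] by (auto simp: state_minus)
    then show ?thesis using cp by (auto simp: t_def state_scaleR divide_le_eq le_divide_eq abs_le_iff)
  qed
  show "Im (\<phi> h) = 0" using scaled[of "norm h + 1"] by simp
  show "\<bar>Re (\<phi> h)\<bar> \<le> norm h" by (rule dense_ge) (use scaled in blast)
qed

lemma norm_state_selfadjoint_le: "star h = h \<Longrightarrow> norm (\<phi> h) \<le> norm h"
  using state_selfadjoint_bound[of h] by (simp add: cmod_eq_Re)

text \<open>Cartesian decomposition \<open>x = h + \<i> k\<close> with self-adjoint \<open>h\<close>, \<open>k\<close> of norm at most \<open>norm x\<close>.\<close>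
lemma norm_state_le: "norm (\<phi> x) \<le> 2 * norm x"
proof -
  define h where "h = (1/2) *\<^sub>R (x + star x)"
  define k where "k = sc (- \<i> / 2) (x - star x)"
  have sh: "star h = h" by (simp add: h_def star_scaleR star_add add.commute)
  have "star k = sc (\<i> / 2) (- (x - star x))" by (simp add: k_def star_sc star_diff)
  then have sk: "star k = k" by (simp only: k_def sc_minus_right sc_minus_left divide_minus_left)
  have "sc \<i> k = (1/2) *\<^sub>R (x - star x)"
    by (simp add: k_def sc_sc sc_of_real[symmetric])
  then have "h + sc \<i> k = (1/2) *\<^sub>R ((x + star x) + (x - star x))"
    by (simp only: h_def scaleR_add_right)
  also have "(x + star x) + (x - star x) = 2 *\<^sub>R x" by (simp add: scaleR_2)
  finally have "x = h + sc \<i> k" by simp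
  then have "norm (\<phi> x) \<le> norm (\<phi> h) + norm (\<phi> k)"
    using norm_triangle_ineq[of "\<phi> h" "\<i> * \<phi> k"] by (simp add: state_add state_sc norm_mult)
  also have "\<dots> \<le> norm h + norm k"
    using norm_state_selfadjoint_le[OF sh] norm_state_selfadjoint_le[OF sk] by simp
  also have "norm h \<le> norm x"
    using norm_triangle_ineq[of x "star x"] by (simp add: h_def)
  also have "norm k \<le> norm x"
    using norm_triangle_ineq4[of x "star x"] by (simp add: k_def norm_sc norm_divide)
  finally show ?thesis by simp
qed

lemma bounded_linear_state: "bounded_linear \<phi>"
proof (rule bounded_linear_intro[where K = 2])
  show "\<phi> (r *\<^sub>R x) = r *\<^sub>R \<phi> x" for r x
    unfolding state_scaleR by (simp add: scaleR_conv_of_real)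
  show "norm (\<phi> x) \<le> norm x * 2" for x
    using norm_state_le[of x] by (simp add: mult.commute)
qed (rule state_add)

lemma state_resolvent_series:
  assumes inv: "b * binv = 1" and small: "norm binv * norm x < 1"
  obtains X where "(b - x) * X = 1" and "(\<lambda>n. \<phi> (binv * (x * binv) ^ n)) sums \<phi> X"
proof
  define T where "T = x * binv"
  have T: "norm T < 1" using small norm_mult_ineq[of x binv] by (simp add: T_def mult.commute)
  have "(\<lambda>n. T ^ n) sums (\<Sum>n. T ^ n)"
    by (rule summable_sums[OF summable_norm_cancel[OF summable_norm_power[OF T]]])
  then have "(\<lambda>n. binv * T ^ n) sums (binv * (\<Sum>n. T ^ n))"
    by (rule bounded_linear.sums[OF bounded_linear_mult_right])
  then show "(\<lambda>n. \<phi> (binv * (x * binv) ^ n)) sums \<phi> (binv * (\<Sum>n. T ^ n))"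
    unfolding T_def by (rule bounded_linear.sums[OF bounded_linear_state])
  have "(b - x) * (binv * (\<Sum>n. T ^ n)) = (1 - T) * (\<Sum>n. T ^ n)"
    by (simp only: T_def mult.assoc[symmetric] left_diff_distrib inv)
  then show "(b - x) * (binv * (\<Sum>n. T ^ n)) = 1"
    using neumann_series_inverse(1)[OF T] by simp
qed

end

lemma cstar_gen_subset: "x \<in> S \<Longrightarrow> x \<in> cstar_gen sc star S"
  unfolding cstar_gen_def by blast
lemma cstar_gen_zero: "0 \<in> cstar_gen sc star S"
  unfolding cstar_gen_def by blast
lemma cstar_gen_add: "x \<in> cstar_gen sc star S \<Longrightarrow> y \<in> cstar_gen sc star S \<Longrightarrow> x + y \<in> cstar_gen sc star S"
  unfolding cstar_gen_def by blast
lemma cstar_gen_mult: "x \<in> cstar_gen sc star S \<Longrightarrow> y \<in> cstar_gen sc star S \<Longrightarrow> x * y \<in> cstar_gen sc star S"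
  unfolding cstar_gen_def by blast
lemma cstar_gen_sc: "x \<in> cstar_gen sc star S \<Longrightarrow> sc c x \<in> cstar_gen sc star S"
  unfolding cstar_gen_def by blast
lemma closed_cstar_gen: "closed (cstar_gen sc star S)"
  unfolding cstar_gen_def by (rule closed_Inter) blast
lemma cstar_gen_sum: "(\<And>i. i \<in> A \<Longrightarrow> f i \<in> cstar_gen sc star S) \<Longrightarrow> sum f A \<in> cstar_gen sc star S"
  by (induction A rule: infinite_finite_induct) (auto intro: cstar_gen_zero cstar_gen_add)
lemma cstar_gen_sums: "(\<And>n. f n \<in> cstar_gen sc star S) \<Longrightarrow> f sums l \<Longrightarrow> l \<in> cstar_gen sc star S"
  unfolding sums_def by (rule closed_sequentially[OF closed_cstar_gen]) (auto intro: cstar_gen_sum)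

lemma alt_distinct_Cons:
  assumes "ps \<noteq> []" and "p \<noteq> hd ps" and "alt_distinct ps"
  shows "alt_distinct (p # ps)"
  unfolding alt_distinct_def
proof (intro allI impI)
  fix k assume k: "Suc k < length (p # ps)"
  show "(p # ps) ! k \<noteq> (p # ps) ! Suc k"
  proof (cases k)
    case 0 then show ?thesis using assms(1,2) by (cases ps) auto
  next
    case (Suc j) then show ?thesis using assms(3) k by (auto simp: alt_distinct_def)
  qed
qed

locale smf_setup = cstar_state sc star \<phi>
  for sc :: "complex \<Rightarrow> 'a::{real_normed_algebra_1,banach} \<Rightarrow> 'a" and star \<phi> +
  fixes b :: "nat \<Rightarrow> 'a" and J :: "(nat \<times> nat) set" and a u :: "nat \<times> nat \<Rightarrow> 'a"
  assumes J_subset: "J \<subseteq> {1,2} \<times> {1,2}"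
    and smf: "strongly_matricially_free sc star \<phi> b J a u"
begin

definition Alg :: "nat \<times> nat \<Rightarrow> 'a set"
  where "Alg p = cstar_gen sc star {a p, star (a p), u p}"
definition \<psi> :: "nat \<times> nat \<Rightarrow> 'a \<Rightarrow> complex"
  where "\<psi> = mstate star \<phi> b"
definition internal_alg :: "'a set"
  where "internal_alg = cstar_gen sc star (insert 1 (u ` J))"

lemma finite_J: "finite J"
  using J_subset by (rule finite_subset) simp

lemma card_J_le: "card J \<le> 4"
  using card_mono[OF _ J_subset] by simp

lemma smf_clauses:
  "(\<forall>p\<in>J. star (u p) = u p \<and> u p * u p = u p) \<and>
   (\<forall>p\<in>J. \<forall>x\<in>Alg p. u p * x = x \<and> x * u p = x) \<and>
   (\<forall>p\<in>J. fst p \<noteq> snd p \<longrightarrow> (snd p, snd p) \<in> J \<and> b (snd p) \<in> Alg (snd p, snd p) \<and>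
      \<phi> (b (snd p)) = 0 \<and> \<phi> (star (b (snd p)) * b (snd p)) = 1) \<and>
   (\<forall>p\<in>J. \<phi> (u p) = (if fst p = snd p then 1 else 0)) \<and>
   (\<forall>p qs ys x. qs \<noteq> [] \<longrightarrow> set (p # qs) \<subseteq> J \<longrightarrow> alt_distinct (p # qs) \<longrightarrow>
      length ys = length qs \<longrightarrow>
      (\<forall>k<length qs. ys ! k \<in> Alg (qs ! k) \<and> \<psi> (qs ! k) (ys ! k) = 0) \<longrightarrow>
      \<phi> (x * u p * prod_list ys) = (if in_Gamma (p # qs) then \<phi> (x * prod_list ys) else 0)) \<and>
   (\<forall>ps xs. ps \<noteq> [] \<longrightarrow> set ps \<subseteq> J \<longrightarrow> alt_distinct ps \<longrightarrow> length xs = length ps \<longrightarrow>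
      (\<forall>k<length ps. xs ! k \<in> Alg (ps ! k) \<and> \<psi> (ps ! k) (xs ! k) = 0) \<longrightarrow>
      \<phi> (prod_list xs) = 0)"
  using smf unfolding strongly_matricially_free_def Let_def Alg_def[symmetric] \<psi>_def[symmetric]
  by (elim conjE) (intro conjI; assumption)

lemma u_idem: "p \<in> J \<Longrightarrow> u p * u p = u p"
  using smf_clauses by blast
lemma u_selfadjoint: "p \<in> J \<Longrightarrow> star (u p) = u p"
  using smf_clauses by blast
lemma u_unit: "p \<in> J \<Longrightarrow> x \<in> Alg p \<Longrightarrow> u p * x = x \<and> x * u p = x"
  using smf_clauses by blast
lemma b_properties:
  "p \<in> J \<Longrightarrow> fst p \<noteq> snd p \<Longrightarrow> (snd p, snd p) \<in> J \<and> b (snd p) \<in> Alg (snd p, snd p) \<and>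
    \<phi> (b (snd p)) = 0 \<and> \<phi> (star (b (snd p)) * b (snd p)) = 1"
  using smf_clauses by blast
lemma state_u: "p \<in> J \<Longrightarrow> \<phi> (u p) = (if fst p = snd p then 1 else 0)"
  using smf_clauses by blast
lemma state_mult_u_prod_list:
  "qs \<noteq> [] \<Longrightarrow> set (p # qs) \<subseteq> J \<Longrightarrow> alt_distinct (p # qs) \<Longrightarrow> length ys = length qs \<Longrightarrow>
    \<forall>k<length qs. ys ! k \<in> Alg (qs ! k) \<and> \<psi> (qs ! k) (ys ! k) = 0 \<Longrightarrow>
    \<phi> (x * u p * prod_list ys) = (if in_Gamma (p # qs) then \<phi> (x * prod_list ys) else 0)"
  using smf_clauses by blast
lemma state_prod_list_centred:
  "ps \<noteq> [] \<Longrightarrow> set ps \<subseteq> J \<Longrightarrow> alt_distinct ps \<Longrightarrow> length xs = length ps \<Longrightarrow>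
    \<forall>k<length ps. xs ! k \<in> Alg (ps ! k) \<and> \<psi> (ps ! k) (xs ! k) = 0 \<Longrightarrow> \<phi> (prod_list xs) = 0"
  using smf_clauses by blast

lemma a_in_Alg: "a p \<in> Alg p"
  unfolding Alg_def by (rule cstar_gen_subset) simp
lemma u_in_Alg: "u p \<in> Alg p"
  unfolding Alg_def by (rule cstar_gen_subset) simp
lemma u_mult_a: "p \<in> J \<Longrightarrow> u p * a p = a p"
  using u_unit[OF _ a_in_Alg] by blast
lemma a_mult_u: "p \<in> J \<Longrightarrow> a p * u p = a p"
  using u_unit[OF _ a_in_Alg] by blast

lemma norm_u_le: "p \<in> J \<Longrightarrow> norm (u p) \<le> 1"
proof -
  assume p: "p \<in> J"
  have "(norm (u p))\<^sup>2 = norm (u p)"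
    using norm_star_mult_self[of "u p"] u_selfadjoint[OF p] u_idem[OF p] by simp
  then have "norm (u p) * (norm (u p) - 1) = 0" by (simp add: power2_eq_square algebra_simps)
  then show ?thesis by auto
qed

lemma bounded_linear_psi: "bounded_linear (\<psi> p)"
proof (cases "fst p = snd p")
  case True
  then have "\<psi> p = \<phi>" by (simp add: \<psi>_def mstate_def[abs_def])
  then show ?thesis using bounded_linear_state by simp
next
  case False
  then have "\<psi> p = (\<lambda>x. \<phi> ((star (b (snd p)) * x) * b (snd p)))"
    by (simp add: \<psi>_def mstate_def[abs_def])
  then show ?thesis
    by (simp add: bounded_linear_compose[OF bounded_linear_state] bounded_linear_compose[OF bounded_linear_mult_left]
        bounded_linear_mult_right)
qed

lemma psi_sc: "\<psi> p (sc c x) = c * \<psi> p x"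
  by (simp add: \<psi>_def mstate_def state_sc sc_mult_left[symmetric] sc_mult_right[symmetric])

lemma psi_diff: "\<psi> p (x - y) = \<psi> p x - \<psi> p y"
  by (rule linear_diff[OF bounded_linear.linear[OF bounded_linear_psi]])

lemma psi_one: "p \<in> J \<Longrightarrow> \<psi> p 1 = 1"
  using b_properties by (auto simp: \<psi>_def mstate_def)

text \<open>Off the diagonal, \<open>\<psi> (i,j) (u (i,j)) = 1\<close> is an instance of condition (c) with the tuple
  \<open>((i,j),(j,j)) \<in> \<Gamma>\<close> applied to \<open>b j\<close>.\<close>
lemma psi_u: assumes p: "p \<in> J" shows "\<psi> p (u p) = 1"
proof (cases "fst p = snd p")
  case True then show ?thesis using state_u p by (simp add: \<psi>_def mstate_def)
next
  case False
  define j where "j = snd p"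
  have bj: "(j, j) \<in> J" "b j \<in> Alg (j, j)" "\<phi> (b j) = 0" "\<phi> (star (b j) * b j) = 1"
    using b_properties[OF p False] by (simp_all add: j_def)
  have "p \<noteq> (j, j)" using False by (cases p) (auto simp: j_def)
  then have "alt_distinct [p, (j, j)]" by (simp add: alt_distinct_def nth_Cons split: nat.split)
  moreover have "in_Gamma [p, (j, j)]"
    using False by (auto simp: in_Gamma_def j_def nth_Cons split: nat.split)
  moreover have "\<psi> (j, j) (b j) = 0" using bj by (simp add: \<psi>_def mstate_def)
  ultimately have "\<phi> (star (b j) * u p * prod_list [b j]) = \<phi> (star (b j) * prod_list [b j])"
    using state_mult_u_prod_list[of "[(j, j)]" p "[b j]"] p bj by simp
  then show ?thesis using bj by (simp add: \<psi>_def mstate_def False j_def)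
qed

lemma psi_u_mult_power: "p \<in> J \<Longrightarrow> \<psi> p (u p * a p ^ n) = \<psi> p (a p ^ n)"
  by (cases n) (simp_all add: psi_u psi_one mult.assoc[symmetric] u_mult_a)

inductive alt_word :: "(nat \<times> nat \<Rightarrow> 'a) \<Rightarrow> nat \<times> nat \<Rightarrow> 'a \<Rightarrow> bool" for P where
  alt_word_single: "p \<in> J \<Longrightarrow> alt_word P p (P p)"
| alt_word_Cons: "p \<in> J \<Longrightarrow> q \<in> J \<Longrightarrow> q \<noteq> p \<Longrightarrow> alt_word P q y \<Longrightarrow> alt_word P p (P p * y)"

lemma alt_word_prod_list:
  "alt_word P p x \<Longrightarrow>
    \<exists>ps. ps \<noteq> [] \<and> hd ps = p \<and> set ps \<subseteq> J \<and> alt_distinct ps \<and> x = prod_list (map P ps)"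
proof (induction rule: alt_word.induct)
  case (alt_word_single p)
  then show ?case by (intro exI[of _ "[p]"]) (auto simp: alt_distinct_def)
next
  case (alt_word_Cons p q y)
  then obtain ps where "ps \<noteq> []" "hd ps = q" "set ps \<subseteq> J" "alt_distinct ps" "y = prod_list (map P ps)"
    by blast
  with alt_word_Cons.hyps show ?case
    by (intro exI[of _ "p # ps"]) (auto intro: alt_distinct_Cons)
qed

lemma state_alt_word:
  assumes centred: "\<forall>p\<in>J. P p \<in> Alg p \<and> \<psi> p (P p) = 0" and "alt_word P p x"
  shows "\<phi> x = 0"
proof -
  obtain ps where ps: "ps \<noteq> []" "set ps \<subseteq> J" "alt_distinct ps" "x = prod_list (map P ps)"
    using alt_word_prod_list[OF assms(2)] by blast
  have "\<forall>k<length ps. map P ps ! k \<in> Alg (ps ! k) \<and> \<psi> (ps ! k) (map P ps ! k) = 0"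
    using centred ps(2) nth_mem by fastforce
  then show ?thesis using state_prod_list_centred[OF ps(1-3)] ps(4) by simp
qed

inductive alt_comb :: "(nat \<times> nat \<Rightarrow> 'a) \<Rightarrow> nat \<times> nat \<Rightarrow> 'a \<Rightarrow> bool" for P where
  alt_comb_zero: "alt_comb P p 0"
| alt_comb_add_word: "alt_word P p x \<Longrightarrow> alt_comb P p y \<Longrightarrow> alt_comb P p (x + y)"

lemma alt_comb_add: "alt_comb P p x \<Longrightarrow> alt_comb P p y \<Longrightarrow> alt_comb P p (x + y)"
  by (induction rule: alt_comb.induct) (auto simp: add.assoc intro: alt_comb_add_word)

lemma alt_comb_sum: "(\<And>i. i \<in> A \<Longrightarrow> alt_comb P p (f i)) \<Longrightarrow> alt_comb P p (sum f A)"
  by (induction A rule: infinite_finite_induct) (auto intro: alt_comb_zero alt_comb_add)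

lemma alt_comb_mult: "alt_comb P q y \<Longrightarrow> p \<in> J \<Longrightarrow> q \<in> J \<Longrightarrow> q \<noteq> p \<Longrightarrow> alt_comb P p (P p * y)"
  by (induction rule: alt_comb.induct)
    (simp_all add: alt_comb_zero distrib_left alt_comb_add_word alt_word_Cons)

lemma state_alt_comb: "alt_comb P p x \<Longrightarrow> \<forall>p\<in>J. P p \<in> Alg p \<and> \<psi> p (P p) = 0 \<Longrightarrow> \<phi> x = 0"
  by (induction rule: alt_comb.induct) (auto simp: state_add state_alt_word)

definition fixed_point_map :: "(nat \<times> nat \<Rightarrow> 'a) \<Rightarrow> (nat \<times> nat \<Rightarrow> 'a) \<Rightarrow> nat \<times> nat \<Rightarrow> 'a"
  where "fixed_point_map P f p = P p * (1 + (\<Sum>q\<in>J-{p}. f q))"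

lemma alt_comb_fixed_point_iterate:
  "p \<in> J \<Longrightarrow> alt_comb P p ((fixed_point_map P ^^ k) (\<lambda>_. 0) p)"
proof (induction k arbitrary: p)
  case 0 then show ?case by (simp add: alt_comb_zero)
next
  case (Suc k)
  have "(fixed_point_map P ^^ Suc k) (\<lambda>_. 0) p
      = P p + (\<Sum>q\<in>J-{p}. P p * (fixed_point_map P ^^ k) (\<lambda>_. 0) q)"
    by (simp add: fixed_point_map_def distrib_left sum_distrib_left)
  moreover have "alt_comb P p (P p)"
    using alt_comb_add_word[OF alt_word_single[OF Suc.prems] alt_comb_zero] by simp
  ultimately show ?case using Suc by (auto intro!: alt_comb_add alt_comb_sum alt_comb_mult)
qed

lemma norm_fixed_point_iterate_diff_le:
  assumes fixed: "\<forall>p\<in>J. W p = fixed_point_map P W p"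
  shows "(\<Sum>p\<in>J. norm ((fixed_point_map P ^^ k) (\<lambda>_. 0) p - W p))
    \<le> (\<Sum>p\<in>J. norm (P p)) ^ k * (\<Sum>p\<in>J. norm (W p))"
proof (induction k)
  case 0 then show ?case by (simp add: norm_minus_commute)
next
  case (Suc k)
  define V where "V = (fixed_point_map P ^^ k) (\<lambda>_. 0)"
  define e where "e = (\<Sum>p\<in>J. norm (V p - W p))"
  have "norm (fixed_point_map P V p - W p) \<le> norm (P p) * e" if p: "p \<in> J" for p
  proof -
    have "W p = P p * (1 + (\<Sum>q\<in>J-{p}. W q))" using fixed p by (simp add: fixed_point_map_def)
    then have "fixed_point_map P V p - W p = P p * (\<Sum>q\<in>J-{p}. V q - W q)"
      by (simp add: fixed_point_map_def algebra_simps sum_subtractf)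
    then have "norm (fixed_point_map P V p - W p) \<le> norm (P p) * norm (\<Sum>q\<in>J-{p}. V q - W q)"
      by (simp add: norm_mult_ineq)
    also have "norm (\<Sum>q\<in>J-{p}. V q - W q) \<le> e"
      unfolding e_def by (rule order_trans[OF norm_sum sum_mono2]) (auto simp: finite_J)
    finally show ?thesis by (simp add: mult_left_mono)
  qed
  then have "(\<Sum>p\<in>J. norm (fixed_point_map P V p - W p)) \<le> (\<Sum>p\<in>J. norm (P p)) * e"
    by (simp add: sum_distrib_right sum_mono)
  also have "\<dots> \<le> (\<Sum>p\<in>J. norm (P p)) * ((\<Sum>p\<in>J. norm (P p)) ^ k * (\<Sum>p\<in>J. norm (W p)))"
    using Suc.IH by (simp add: e_def V_def mult_left_mono sum_nonneg)
  finally show ?case by (simp add: V_def mult.assoc)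
qed

text \<open>The iterates of the fixed-point map are combinations of alternating words, on which \<open>\<phi>\<close>
  vanishes by freeness, and they converge geometrically to \<open>W\<close>.\<close>
lemma state_fixed_point_vanishes:
  assumes centred: "\<forall>p\<in>J. P p \<in> Alg p \<and> \<psi> p (P p) = 0"
    and small: "(\<Sum>p\<in>J. norm (P p)) < 1"
    and fixed: "\<forall>p\<in>J. W p = fixed_point_map P W p"
    and p0: "p0 \<in> J"
  shows "\<phi> (W p0) = 0"
proof -
  define c where "c = (\<Sum>p\<in>J. norm (P p))"
  define V where "V k = (fixed_point_map P ^^ k) (\<lambda>_. 0)" for k
  have bound: "norm (\<phi> (W p0)) \<le> 2 * (c ^ k * (\<Sum>p\<in>J. norm (W p)))" for k
  proof -
    have "\<phi> (V k p0) = 0"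
      using state_alt_comb[OF alt_comb_fixed_point_iterate[OF p0] centred] by (simp add: V_def)
    then have "norm (\<phi> (W p0)) = norm (\<phi> (V k p0 - W p0))" by (simp add: state_diff)
    also have "\<dots> \<le> 2 * norm (V k p0 - W p0)" by (rule norm_state_le)
    also have "norm (V k p0 - W p0) \<le> (\<Sum>p\<in>J. norm (V k p - W p))"
      by (rule member_le_sum) (auto simp: p0 finite_J)
    also have "\<dots> \<le> c ^ k * (\<Sum>p\<in>J. norm (W p))"
      unfolding V_def c_def by (rule norm_fixed_point_iterate_diff_le[OF fixed])
    finally show ?thesis by simp
  qed
  have "(\<lambda>k. 2 * (c ^ k * (\<Sum>p\<in>J. norm (W p)))) \<longlonglongrightarrow> 0"
    using small by (intro tendsto_mult_right_zero tendsto_mult_left_zero LIMSEQ_power_zero)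
      (simp_all add: c_def sum_nonneg)
  then have "norm (\<phi> (W p0)) \<le> 0"
    by (rule LIMSEQ_le_const) (use bound in auto)
  then show ?thesis by simp
qed

lemma u_mult_power_in_Alg: "x \<in> Alg p \<Longrightarrow> u p * x ^ n \<in> Alg p"
proof (induction n)
  case 0 then show ?case by (simp add: u_in_Alg)
next
  case (Suc n)
  have "u p * x ^ Suc n = (u p * x ^ n) * x" by (simp add: power_Suc2 mult.assoc del: power_Suc)
  with Suc show ?case unfolding Alg_def by (simp add: cstar_gen_mult)
qed

lemma u_mult_neumann_in_Alg:
  assumes "x \<in> Alg p" and "norm x < 1"
  shows "u p * (\<Sum>n. x ^ n) \<in> Alg p"
proof -
  have "(\<lambda>n. x ^ n) sums (\<Sum>n. x ^ n)"
    by (rule summable_sums[OF summable_norm_cancel[OF summable_norm_power[OF assms(2)]]])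
  then have "(\<lambda>n. u p * x ^ n) sums (u p * (\<Sum>n. x ^ n))"
    by (rule bounded_linear.sums[OF bounded_linear_mult_right])
  then show ?thesis
    unfolding Alg_def by (rule cstar_gen_sums[OF u_mult_power_in_Alg[OF assms(1), unfolded Alg_def]])
qed

lemma psi_u_mult_neumann:
  assumes p: "p \<in> J" and small: "norm (sc l (a p)) < 1"
  shows "(\<lambda>n. \<psi> p (a p ^ n) * l ^ Suc n) sums \<psi> p (u p * sc l (\<Sum>n. sc l (a p) ^ n))"
proof -
  have "(\<lambda>n. sc l (a p) ^ n) sums (\<Sum>n. sc l (a p) ^ n)"
    by (rule summable_sums[OF summable_norm_cancel[OF summable_norm_power[OF small]]])
  then have "(\<lambda>n. \<psi> p (u p * sc l (sc l (a p) ^ n))) sums \<psi> p (u p * sc l (\<Sum>n. sc l (a p) ^ n))"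
    by (rule bounded_linear.sums[OF bounded_linear_compose[OF bounded_linear_psi
          bounded_linear_compose[OF bounded_linear_mult_right bounded_linear_sc]]])
  moreover have "\<psi> p (u p * sc l (sc l (a p) ^ n)) = \<psi> p (a p ^ n) * l ^ Suc n" for n
    by (simp add: sc_power sc_sc sc_mult_right[symmetric] psi_sc psi_u_mult_power[OF p] mult.commute)
  ultimately show ?thesis by simp
qed

lemma compressed_resolvent_inverse:
  assumes p: "p \<in> J" and w: "w \<noteq> 0" and small: "norm (sc (inverse w) (a p)) < 1"
  shows "(sc w (u p) - a p) * (u p * sc (inverse w) (\<Sum>n. sc (inverse w) (a p) ^ n)) = u p"
proof -
  define N where "N = (\<Sum>n. sc (inverse w) (a p) ^ n)"
  have "(sc w 1 - a p) * sc (inverse w) N = sc (inverse w) (sc w 1 - a p) * N"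
    by (simp only: sc_mult_left[symmetric] sc_mult_right[symmetric])
  also have "sc (inverse w) (sc w 1 - a p) = 1 - sc (inverse w) (a p)"
    using w by (simp add: sc_diff_right sc_sc)
  finally have inv: "(sc w 1 - a p) * sc (inverse w) N = 1"
    using neumann_series_inverse(1)[OF small] by (simp add: N_def)
  have Y: "sc w (u p) - a p = u p * (sc w 1 - a p)"
    by (simp add: right_diff_distrib sc_mult_right[symmetric] u_mult_a[OF p])
  have Yu: "(sc w (u p) - a p) * u p = sc w (u p) - a p"
    by (simp add: left_diff_distrib sc_mult_left[symmetric] u_idem[OF p] a_mult_u[OF p])
  have "(sc w (u p) - a p) * (u p * sc (inverse w) N) = u p * ((sc w 1 - a p) * sc (inverse w) N)"
    by (metis Y Yu mult.assoc)
  then show ?thesis unfolding N_def[symmetric] inv by simp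
qed

text \<open>With \<open>w = 1/z + R\<close> and \<open>G(w) = z\<close> for the \<open>\<psi> p\<close>-distribution of \<open>a p\<close>, the compressed resolvent
  \<open>K = u p (w - a p)\<inverse>\<close> has \<open>\<psi> p K = z\<close>, so \<open>P = K/z - u p\<close> is centred.\<close>
lemma centred_resolvent:
  assumes p: "p \<in> J" and z: "z \<noteq> 0" and zR: "cmod (z * R) \<le> 1/64" and za: "cmod z * norm (a p) \<le> 1/64"
    and cauchy: "(\<lambda>n. \<psi> p (a p ^ n) * inverse (1/z + R) ^ Suc n) sums z"
  shows "\<exists>P. P \<in> Alg p \<and> \<psi> p P = 0 \<and> norm P \<le> 1/8 \<and> (sc R (u p) - a p) * (1 + P) = - sc (1/z) P"
proof -
  define w where "w = 1/z + R"
  define l where "l = inverse w"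
  note bounds = inverse_shifted_reciprocal_bounds[OF z zR, folded w_def, folded l_def]
  have "cmod l * norm (a p) \<le> 64/63 * cmod z * norm (a p)" by (rule mult_right_mono[OF bounds(2)]) simp
  then have nx: "norm (sc l (a p)) \<le> 1/63" using za by (simp add: norm_sc mult.assoc)
  define N where "N = (\<Sum>n. sc l (a p) ^ n)"
  define K where "K = u p * sc l N"
  define P where "P = sc (1/z) K - u p"
  have "\<psi> p K = z"
    using sums_unique2[OF psi_u_mult_neumann[OF p] cauchy] nx by (simp add: K_def N_def l_def w_def)
  then have "\<psi> p P = 0" using psi_u[OF p] z by (simp add: P_def psi_diff psi_sc)
  moreover have "P \<in> Alg p"
  proof -
    have "K \<in> Alg p"
      using cstar_gen_sc[OF u_mult_neumann_in_Alg[of "sc l (a p)" p, unfolded Alg_def]] nx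
      by (simp add: K_def N_def Alg_def sc_mult_right cstar_gen_sc cstar_gen_subset)
    moreover have "P = sc (1/z) K + sc (-1) (u p)" by (simp add: P_def sc_minus_left)
    ultimately show ?thesis
      using u_in_Alg[of p] unfolding Alg_def by (simp add: cstar_gen_add cstar_gen_sc)
  qed
  moreover have "(sc R (u p) - a p) * (1 + P) = - sc (1/z) P"
  proof -
    have YK: "(sc w (u p) - a p) * K = u p"
      using compressed_resolvent_inverse[OF p bounds(1)] nx by (simp add: K_def N_def l_def)
    have Yu: "(sc w (u p) - a p) * u p = sc w (u p) - a p"
      by (simp add: left_diff_distrib sc_mult_left[symmetric] u_idem[OF p] a_mult_u[OF p])
    have uK: "u p * K = K" by (simp add: K_def mult.assoc[symmetric] u_idem[OF p])
    have D: "sc R (u p) - a p = (sc w (u p) - a p) - sc (1/z) (u p)" by (simp add: w_def sc_add_left)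
    show ?thesis
      unfolding P_def D by (rule resolvent_centring_identity[OF YK Yu u_idem[OF p] uK])
  qed
  moreover have "norm P \<le> 1/8"
  proof -
    have "P = u p * (sc (l / z) N - 1)"
      by (simp add: P_def K_def right_diff_distrib sc_mult_right[symmetric] sc_sc)
    then have "norm P \<le> norm (u p) * norm (sc (l / z) N - 1)" by (simp add: norm_mult_ineq)
    also have "\<dots> \<le> norm (sc (l / z) N - 1)" using norm_u_le[OF p] by (simp add: mult_left_le_one_le)
    also have "\<dots> \<le> (cmod (l / z - 1) + norm (sc l (a p))) / (1 - norm (sc l (a p)))"
      unfolding N_def by (rule norm_sc_neumann_minus_one_le) (use nx in simp)
    also have "\<dots> \<le> (1/63 + 1/63) / (1 - 1/63)"
      using bounds(3) nx by (intro frac_le) auto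
    finally show ?thesis by simp
  qed
  ultimately show ?thesis by blast
qed

lemma sum_norm_less_1:
  assumes "\<forall>p\<in>J. norm (P p) \<le> 1/8"
  shows "(\<Sum>p\<in>J. norm (P p)) < 1"
proof -
  have "(\<Sum>p\<in>J. norm (P p)) \<le> (\<Sum>p\<in>J. 1/8)" using assms by (intro sum_mono) auto
  also have "\<dots> \<le> 4 / 8" using card_J_le by simp
  finally show ?thesis by simp
qed

text \<open>Writing \<open>S = X/z\<close> as \<open>1 + (\<Sum>p. W p)\<close> with \<open>W p = (1 + P p)\<inverse> P p S\<close>, the \<open>W p\<close> solve the
  fixed-point equation of \<open>state_fixed_point_vanishes\<close>, so \<open>\<phi> S = 1\<close>.\<close>
lemma state_inverse_eq:
  assumes z: "z \<noteq> 0"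
    and centred: "\<forall>p\<in>J. P p \<in> Alg p \<and> \<psi> p (P p) = 0 \<and> norm (P p) \<le> 1/8"
    and D: "\<forall>p\<in>J. D p * (1 + P p) = - sc (1/z) (P p)"
    and X: "(sc (1/z) 1 + (\<Sum>p\<in>J. D p)) * X = 1"
  shows "\<phi> X = z"
proof -
  define S where "S = sc (1/z) X"
  have "\<exists>q. (1 + P p) * q = 1 \<and> q * (1 + P p) = 1" if "p \<in> J" for p
    using invertible_one_plus_small[of "P p"] centred that by fastforce
  then obtain Q where Q: "\<And>p. p \<in> J \<Longrightarrow> (1 + P p) * Q p = 1 \<and> Q p * (1 + P p) = 1" by metis
  have commute: "Q p * P p = P p * Q p" if p: "p \<in> J" for p
  proof -
    have "Q p * P p = Q p * P p * ((1 + P p) * Q p)" using Q[OF p] by simp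
    also have "\<dots> = (Q p * (1 + P p)) * P p * Q p" by (simp add: algebra_simps)
    finally show ?thesis using Q[OF p] by simp
  qed
  have D_eq: "D p = - sc (1/z) (P p * Q p)" if p: "p \<in> J" for p
  proof -
    have "D p = D p * ((1 + P p) * Q p)" using Q[OF p] by simp
    also have "\<dots> = - sc (1/z) (P p) * Q p" using D p by (simp add: mult.assoc[symmetric])
    finally show ?thesis by (simp add: sc_mult_left)
  qed
  define W where "W p = Q p * P p * S" for p
  have "sc (1/z) 1 = (sc (1/z) 1 - (\<Sum>p\<in>J. sc (1/z) (P p * Q p))) * S"
    using X D_eq by (simp add: S_def sc_mult_right[symmetric] sum_negf)
  also have "\<dots> = sc (1/z) (S - (\<Sum>p\<in>J. W p))"
    by (simp add: W_def commute algebra_simps sum_distrib_right sc_mult_left[symmetric] sc_diff_right sc_sum_right)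
  finally have "sc z (sc (1/z) 1) = sc z (sc (1/z) (S - (\<Sum>p\<in>J. W p)))" by simp
  then have S: "S = 1 + (\<Sum>p\<in>J. W p)" using z by (simp add: sc_sc algebra_simps)
  have "W p = fixed_point_map P W p" if p: "p \<in> J" for p
  proof -
    have "W p + P p * W p = ((1 + P p) * Q p) * P p * S" by (simp add: W_def algebra_simps)
    also have "\<dots> = P p * S" using Q[OF p] by simp
    also have "\<dots> = P p * (1 + (\<Sum>q\<in>J-{p}. W q)) + P p * W p"
      using p finite_J by (simp add: S sum_diff1 algebra_simps)
    finally show ?thesis by (simp add: fixed_point_map_def)
  qed
  then have "\<phi> (W p) = 0" if "p \<in> J" for p
    using state_fixed_point_vanishes[of P W p] centred sum_norm_less_1[of P] that by blast
  then have "\<phi> S = 1" by (simp add: S state_add state_sum)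
  then show ?thesis using z by (simp add: S_def state_sc)
qed

lemma cauchy_transform_sum_at:
  assumes z: "z \<noteq> 0"
    and centred: "\<forall>p\<in>J. P p \<in> Alg p \<and> \<psi> p (P p) = 0 \<and> norm (P p) \<le> 1/8 \<and>
        (sc (Rz p) (u p) - a p) * (1 + P p) = - sc (1/z) (P p)"
    and zR: "\<forall>p\<in>J. cmod (z * Rz p) \<le> 1/64"
    and zA: "cmod z * norm (\<Sum>p\<in>J. a p) \<le> 1/2"
  shows "\<exists>binv. sc (1/z) 1 + (\<Sum>p\<in>J. sc (Rz p) (u p)) \<in> internal_alg \<and>
        (sc (1/z) 1 + (\<Sum>p\<in>J. sc (Rz p) (u p))) * binv = 1 \<and>
        binv * (sc (1/z) 1 + (\<Sum>p\<in>J. sc (Rz p) (u p))) = 1 \<and>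
        norm binv * norm (\<Sum>p\<in>J. a p) < 1 \<and>
        (\<lambda>n. \<phi> (binv * ((\<Sum>p\<in>J. a p) * binv) ^ n)) sums z"
proof -
  define B where "B = sc (1/z) 1 + (\<Sum>p\<in>J. sc (Rz p) (u p))"
  define M where "M = (\<Sum>p\<in>J. sc (z * Rz p) (u p))"
  have "norm (sc (z * Rz p) (u p)) \<le> 1/64" if "p \<in> J" for p
    using mult_mono[of "cmod (z * Rz p)" "1/64" "norm (u p)" 1] zR norm_u_le[OF that] that
    by (simp add: norm_sc)
  then have "norm M \<le> (\<Sum>p\<in>J. 1/64)"
    unfolding M_def by (intro order_trans[OF norm_sum] sum_mono)
  also have "\<dots> \<le> 1/16" using card_J_le by simp
  finally have M: "norm M \<le> 1/16" .
  obtain Q where Q: "(1 + M) * Q = 1" "Q * (1 + M) = 1" "norm Q \<le> 1 / (1 - norm M)"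
    using invertible_one_plus_small[of M] M by auto
  have B: "B = sc (1/z) (1 + M)"
    using z by (simp add: B_def M_def sc_add_right sc_sum_right sc_sc)
  have inv: "B * sc z Q = 1" "sc z Q * B = 1" using z Q by (simp_all add: B sc_mult_sc)
  have "1 / (1 - norm M) \<le> 16/15" using M by (simp add: divide_le_eq)
  then have "norm Q \<le> 16/15" using Q(3) by linarith
  then have "norm Q * (cmod z * norm (\<Sum>p\<in>J. a p)) \<le> 16/15 * (1/2)"
    using zA by (intro mult_mono) auto
  then have small: "norm (sc z Q) * norm (\<Sum>p\<in>J. a p) < 1" by (simp add: norm_sc mult_ac)
  obtain X where X: "(B - (\<Sum>p\<in>J. a p)) * X = 1"
    and series: "(\<lambda>n. \<phi> (sc z Q * ((\<Sum>p\<in>J. a p) * sc z Q) ^ n)) sums \<phi> X"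
    using state_resolvent_series[OF inv(1) small] by blast
  have BA: "B - (\<Sum>p\<in>J. a p) = sc (1/z) 1 + (\<Sum>p\<in>J. sc (Rz p) (u p) - a p)"
    by (simp add: B_def sum_subtractf)
  have "\<phi> X = z"
    using state_inverse_eq[OF z _ _ X[unfolded BA], of P] centred by blast
  moreover have "B \<in> internal_alg"
    unfolding B_def internal_alg_def by (intro cstar_gen_add cstar_gen_sc cstar_gen_sum cstar_gen_subset) auto
  ultimately show ?thesis using inv small series by (intro exI[of _ "sc z Q"]) (simp add: B_def)
qed

lemma eventually_cauchy_transform_R:
  assumes R: "\<forall>p\<in>J. scalar_R_transform (\<lambda>n. \<psi> p (a p ^ n)) (R p)"
  shows "\<forall>\<^sub>F z in at 0. \<exists>binv.
        sc (1/z) 1 + (\<Sum>p\<in>J. sc (R p z) (u p)) \<in> internal_alg \<and>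
        (sc (1/z) 1 + (\<Sum>p\<in>J. sc (R p z) (u p))) * binv = 1 \<and>
        binv * (sc (1/z) 1 + (\<Sum>p\<in>J. sc (R p z) (u p))) = 1 \<and>
        norm binv * norm (\<Sum>p\<in>J. a p) < 1 \<and>
        (\<lambda>n. \<phi> (binv * ((\<Sum>p\<in>J. a p) * binv) ^ n)) sums z"
proof -
  have "\<forall>\<^sub>F z in at 0. \<forall>p\<in>J. cmod z * norm (a p) < 1/64 \<and> cmod (z * R p z) < 1/64 \<and>
      (\<lambda>n. \<psi> p (a p ^ n) * inverse (1/z + R p z) ^ Suc n) sums z"
  proof (rule eventually_ball_finite[OF finite_J], rule ballI)
    fix p assume "p \<in> J"
    then have Rp: "scalar_R_transform (\<lambda>n. \<psi> p (a p ^ n)) (R p)" using R by blast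
    show "\<forall>\<^sub>F z in at 0. cmod z * norm (a p) < 1/64 \<and> cmod (z * R p z) < 1/64 \<and>
        (\<lambda>n. \<psi> p (a p ^ n) * inverse (1/z + R p z) ^ Suc n) sums z"
      using eventually_at_0_norm_mult_less[of "1/64" "norm (a p)"]
        scalar_R_transform_eventually_small[OF Rp, of "1/64"] Rp
      unfolding scalar_R_transform_def by (auto intro: eventually_conj)
  qed
  moreover have "\<forall>\<^sub>F z in at 0. cmod z * norm (\<Sum>p\<in>J. a p) < 1/2"
    by (rule eventually_at_0_norm_mult_less) simp
  moreover have "\<forall>\<^sub>F z in at 0. z \<noteq> 0" by (simp add: eventually_at_filter)
  ultimately show ?thesis
  proof eventually_elim
    case (elim z)
    have zR: "\<forall>p\<in>J. cmod (z * R p z) \<le> 1/64" and zA: "cmod z * norm (\<Sum>p\<in>J. a p) \<le> 1/2"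
      using elim(1,2) by (simp_all add: less_imp_le)
    have "\<forall>p\<in>J. \<exists>P. P \<in> Alg p \<and> \<psi> p P = 0 \<and> norm P \<le> 1/8 \<and>
        (sc (R p z) (u p) - a p) * (1 + P) = - sc (1/z) P"
    proof
      fix p assume p: "p \<in> J"
      show "\<exists>P. P \<in> Alg p \<and> \<psi> p P = 0 \<and> norm P \<le> 1/8 \<and> (sc (R p z) (u p) - a p) * (1 + P) = - sc (1/z) P"
        using elim(1) p by (intro centred_resolvent[OF p elim(3)]) (auto simp: less_imp_le)
    qed
    then obtain P where "\<forall>p\<in>J. P p \<in> Alg p \<and> \<psi> p (P p) = 0 \<and> norm (P p) \<le> 1/8 \<and>
        (sc (R p z) (u p) - a p) * (1 + P p) = - sc (1/z) (P p)"
      by (rule bchoice[THEN exE])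
    then show ?case using cauchy_transform_sum_at[OF elim(3) _ zR zA] by blast
  qed
qed

lemma R_transform_sum_power_series:
  assumes R: "\<forall>p\<in>J. scalar_R_transform (\<lambda>n. \<psi> p (a p ^ n)) (R p)"
  shows "\<exists>c \<epsilon>. \<epsilon> > 0 \<and> (\<forall>n. c (Suc n) \<in> internal_alg) \<and>
    (\<forall>z. cmod z < \<epsilon> \<longrightarrow> summable (\<lambda>n. norm (sc (z ^ n) (c (Suc n)))) \<and>
      (\<lambda>n. sc (z ^ n) (c (Suc n))) sums (\<Sum>p\<in>J. sc (R p z) (u p)))"
proof -
  have "\<forall>p\<in>J. \<exists>r. \<forall>\<^sub>F z in nhds 0. summable (\<lambda>n. norm (r n * z ^ n)) \<and> (\<lambda>n. r n * z ^ n) sums R p z"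
  proof
    fix p assume "p \<in> J"
    then show "\<exists>r. \<forall>\<^sub>F z in nhds 0. summable (\<lambda>n. norm (r n * z ^ n)) \<and> (\<lambda>n. r n * z ^ n) sums R p z"
      using R by (blast elim: scalar_R_transform_power_series)
  qed
  then obtain r where r: "\<forall>p\<in>J. \<forall>\<^sub>F z in nhds 0.
      summable (\<lambda>n. norm (r p n * z ^ n)) \<and> (\<lambda>n. r p n * z ^ n) sums R p z"
    by (rule bchoice[THEN exE])
  obtain \<epsilon> where "\<epsilon> > 0" and "\<forall>z. cmod z < \<epsilon> \<longrightarrow>
      summable (\<lambda>n. norm (sc (z ^ n) (\<Sum>p\<in>J. sc (r p n) (u p)))) \<and>
      (\<lambda>n. sc (z ^ n) (\<Sum>p\<in>J. sc (r p n) (u p))) sums (\<Sum>p\<in>J. sc (R p z) (u p))"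
    using power_series_sum_sc[OF finite_J r, where v = u] by blast
  moreover have "(\<Sum>p\<in>J. sc (r p n) (u p)) \<in> internal_alg" for n
    unfolding internal_alg_def by (intro cstar_gen_sum cstar_gen_sc cstar_gen_subset) auto
  ultimately show ?thesis
    by (intro exI[of _ "\<lambda>n. \<Sum>p\<in>J. sc (r p (n - 1)) (u p)"] exI[of _ \<epsilon>]) simp
qed

end

theorem theorem5p1:
  fixes sc :: "complex \<Rightarrow> 'a::{real_normed_algebra_1,banach} \<Rightarrow> 'a"
    and star :: "'a \<Rightarrow> 'a"
    and \<phi> :: "'a \<Rightarrow> complex"
    and b :: "nat \<Rightarrow> 'a"
    and J :: "(nat \<times> nat) set"
    and a u :: "nat \<times> nat \<Rightarrow> 'a"
    and R :: "nat \<times> nat \<Rightarrow> complex \<Rightarrow> complex"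
  assumes alg: "unital_cstar_algebra sc star"
    and state: "is_state sc star \<phi>"
    and J: "J \<subseteq> {1,2} \<times> {1,2}"
    and smf: "strongly_matricially_free sc star \<phi> b J a u"
    and Rt: "\<forall>p\<in>J. scalar_R_transform (\<lambda>n. mstate star \<phi> b p (a p ^ n)) (R p)"
  shows "op_R_transform sc \<phi> (cstar_gen sc star (insert 1 (u ` J))) (\<Sum>p\<in>J. a p)
           (\<lambda>z. \<Sum>p\<in>J. sc (R p z) (u p))"
proof -
  interpret smf_setup sc star \<phi> b J a u
    by unfold_locales (fact alg, fact state, fact J, fact smf)
  have R: "\<forall>p\<in>J. scalar_R_transform (\<lambda>n. \<psi> p (a p ^ n)) (R p)"
    using Rt by (simp add: \<psi>_def)
  show ?thesis
    unfolding op_R_transform_def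
    using R_transform_sum_power_series[OF R] eventually_cauchy_transform_R[OF R]
    unfolding internal_alg_def by (rule conjI)
qed

end
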